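(* Let $\mu$ be a probability measure on $\mathbb{R}^p$ with compact support. Let $(X_i)_{i\in\mathbb{N}}$ be a sequence of i.i.d. $\mathbb{R}^p$-valued random variables with common distribution $\mu$, and for $n\ge1$ let $\mu_n=\frac1n\sum_{i=1}^n\delta_{X_i}$ be the empirical measure. Then for every positive integer $d$ such that the moment matrix $\mathbf{M}_d(\mu)$ is invertible, \[\sup_{\mathbf{x}\in\mathbb{R}^p}\left|\Lambda_{\mu_n,d}(\mathbf{x})-\Lambda_{\mu,d}(\mathbf{x})\right|\longrightarrow0\quad\text{almost surely as }n\to\infty.\]
   Context: For a finite Borel measure $\nu$ on $\mathbb{R}^p$ with finite moments and $d\in\mathbb{N}$, the Christoffel function is $\Lambda_{\nu,d}(\xi)=\min\{\int P^2\,d\nu: P\in\mathbb{R}[X]_d,\ P(\xi)=1\}$, where $\mathbb{R}[X]_d$ is the space of real polynomials in $p$ variables of total degree at most $d$; for $\mu_n$ this is $\min\{\frac1n\sum_{i=1}^nP(X_i)^2: P\in\mathbb{R}[X]_d,\ P(\xi)=1\}$. The moment matrix is $\mathbf{M}_d(\nu)=\int\mathbf{v}_d(\mathbf{x})\mathbf{v}_d(\mathbf{x})^Td\nu(\mathbf{x})$ where $\mathbf{v}_d(\mathbf{x})$ is the vector of all monomials $\mathbf{x}^\alpha$ of total degree at most $d$; when it is invertible, $\Lambda_{\nu,d}(\xi)=(\mathbf{v}_d(\xi)^T\mathbf{M}_d(\nu)^{-1}\mathbf{v}_d(\xi))^{-1}$. *)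

theory Defs
  imports "HOL-Probability.Probability"
begin

definition mindices :: "nat \<Rightarrow> ('p::finite \<Rightarrow> nat) set" where
  "mindices d = {\<alpha>. (\<Sum>i\<in>UNIV. \<alpha> i) \<le> d}"

definition monomial_val :: "('p::finite \<Rightarrow> nat) \<Rightarrow> real^'p \<Rightarrow> real" where
  "monomial_val \<alpha> x = (\<Prod>i\<in>UNIV. (x $ i) ^ (\<alpha> i))"

definition polys :: "nat \<Rightarrow> (real^'p::finite \<Rightarrow> real) set" where
  "polys d = {P. \<exists>c. \<forall>x. P x = (\<Sum>\<alpha>\<in>mindices d. c \<alpha> * monomial_val \<alpha> x)}"

definition christoffel :: "(real^'p::finite) measure \<Rightarrow> nat \<Rightarrow> real^'p \<Rightarrow> real" where
  "christoffel \<nu> d \<xi> = Inf {(\<integral>x. (P x)\<^sup>2 \<partial>\<nu>) | P. P \<in> polys d \<and> P \<xi> = 1}"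

definition christoffel_emp :: "(nat \<Rightarrow> real^'p::finite) \<Rightarrow> nat \<Rightarrow> nat \<Rightarrow> real^'p \<Rightarrow> real" where
  "christoffel_emp X n d \<xi> =
     Inf {(1 / real n) * (\<Sum>i=1..n. (P (X i))\<^sup>2) | P. P \<in> polys d \<and> P \<xi> = 1}"

definition moment_matrix :: "(real^'p::finite) measure \<Rightarrow> nat \<Rightarrow> ('p \<Rightarrow> nat) \<Rightarrow> ('p \<Rightarrow> nat) \<Rightarrow> real" where
  "moment_matrix \<nu> d \<alpha> \<beta> = (\<integral>x. monomial_val \<alpha> x * monomial_val \<beta> x \<partial>\<nu>)"

definition invertible_on :: "'i set \<Rightarrow> ('i \<Rightarrow> 'i \<Rightarrow> real) \<Rightarrow> bool" where
  "invertible_on A M \<longleftrightarrow> (\<exists>N. \<forall>a\<in>A. \<forall>b\<in>A.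
      (\<Sum>c\<in>A. M a c * N c b) = (if a = b then 1 else 0) \<and>
      (\<Sum>c\<in>A. N a c * M c b) = (if a = b then 1 else 0))"

end

theory Submission
  imports Defs
begin

text \<open>
  Writing a polynomial of degree at most \<open>d\<close> through its coefficient vector \<open>c\<close>, both Christoffel
  functions are infima of quadratic forms over the affine set \<open>{c. P\<^sub>c(\<xi>) = 1}\<close>: the form of
  the moment matrix \<open>M\<^sub>d(\<mu>)\<close> and that of the empirical moment matrix \<open>M\<^sub>d(\<mu>\<^sub>n)\<close>. Invertibility
  of \<open>M\<^sub>d(\<mu>)\<close> together with Cauchy--Schwarz gives \<open>\<parallel>c\<parallel>\<^sub>1\<^sup>2 \<le> C c\<^sup>T M\<^sub>d(\<mu>) c\<close>, so an entrywise error
  \<open>\<delta>\<close> of the empirical moments is a relative error \<open>\<delta>C\<close> of every quadratic form, hence an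
  absolute error at most \<open>\<delta>C\<close> of the infima, uniformly in \<open>\<xi>\<close> (the constant polynomial shows
  \<open>\<Lambda>\<^sub>\<mu>\<^sub>,\<^sub>d \<le> 1\<close>). Because \<open>\<mu>\<close> has compact support, each empirical moment is an average of
  bounded i.i.d. variables and converges almost surely by Hoeffding's inequality and
  Borel--Cantelli.
\<close>

section \<open>Polynomials and quadratic forms\<close>

definition poly_eval :: "nat \<Rightarrow> (('p::finite \<Rightarrow> nat) \<Rightarrow> real) \<Rightarrow> real^'p \<Rightarrow> real" where
  "poly_eval d c x = (\<Sum>\<alpha>\<in>mindices d. c \<alpha> * monomial_val \<alpha> x)"

definition quad_form :: "'i set \<Rightarrow> ('i \<Rightarrow> 'i \<Rightarrow> real) \<Rightarrow> ('i \<Rightarrow> real) \<Rightarrow> real" where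
  "quad_form A G c = (\<Sum>\<alpha>\<in>A. \<Sum>\<beta>\<in>A. c \<alpha> * c \<beta> * G \<alpha> \<beta>)"

definition empirical_moment_matrix ::
    "(nat \<Rightarrow> real^'p::finite) \<Rightarrow> nat \<Rightarrow> ('p \<Rightarrow> nat) \<Rightarrow> ('p \<Rightarrow> nat) \<Rightarrow> real" where
  "empirical_moment_matrix Y n \<alpha> \<beta> = (\<Sum>i=1..n. monomial_val \<alpha> (Y i) * monomial_val \<beta> (Y i)) / real n"

lemma finite_mindices: "finite (mindices d :: ('p::finite \<Rightarrow> nat) set)"
proof (rule finite_subset)
  show "mindices d \<subseteq> PiE (UNIV :: 'p set) (\<lambda>_. {..d})"
  proof
    fix \<alpha> :: "'p \<Rightarrow> nat"
    assume "\<alpha> \<in> mindices d"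
    then have "\<alpha> i \<le> d" for i
      using member_le_sum[of i UNIV \<alpha>] by (simp add: mindices_def)
    then show "\<alpha> \<in> PiE UNIV (\<lambda>_. {..d})"
      by (simp add: PiE_def extensional_def)
  qed
qed (simp add: finite_PiE)

lemma continuous_on_monomial_val [continuous_intros]: "continuous_on S (monomial_val \<alpha>)"
  unfolding monomial_val_def by (intro continuous_intros)

lemma polys_eq_range_poly_eval: "polys d = range (poly_eval d)"
  by (auto simp: polys_def poly_eval_def fun_eq_iff)

lemma Collect_polys_eq_image:
  "{f P | P. P \<in> polys d \<and> P \<xi> = 1} = (\<lambda>c. f (poly_eval d c)) ` {c. poly_eval d c \<xi> = 1}"
  unfolding polys_eq_range_poly_eval by auto

lemma poly_eval_unit_coeff:
  assumes "\<alpha> \<in> mindices d"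
  shows "poly_eval d (\<lambda>\<beta>. if \<beta> = \<alpha> then 1 else 0) = monomial_val \<alpha>"
proof
  fix x
  have "poly_eval d (\<lambda>\<beta>. if \<beta> = \<alpha> then 1 else 0) x =
      (\<Sum>\<beta>\<in>mindices d. if \<beta> = \<alpha> then monomial_val \<beta> x else 0)"
    unfolding poly_eval_def by (intro sum.cong) auto
  then show "poly_eval d (\<lambda>\<beta>. if \<beta> = \<alpha> then 1 else 0) x = monomial_val \<alpha> x"
    using assms by (simp add: finite_mindices)
qed

lemma poly_eval_const_one: "poly_eval d (\<lambda>\<beta>. if \<beta> = (\<lambda>_. 0) then 1 else 0) x = 1"
  by (subst poly_eval_unit_coeff) (simp_all add: mindices_def monomial_val_def)

lemma poly_eval_mult:
  "poly_eval d c x * poly_eval d c' x =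
     (\<Sum>\<alpha>\<in>mindices d. \<Sum>\<beta>\<in>mindices d. c \<alpha> * c' \<beta> * (monomial_val \<alpha> x * monomial_val \<beta> x))"
  unfolding poly_eval_def sum_product by (simp add: mult_ac)

lemma quad_form_empirical_moment_matrix:
  "quad_form (mindices d) (empirical_moment_matrix Y n) c = (1 / real n) * (\<Sum>i=1..n. (poly_eval d c (Y i))\<^sup>2)"
proof -
  have "quad_form (mindices d) (empirical_moment_matrix Y n) c = (1 / real n) *
      (\<Sum>\<alpha>\<in>mindices d. \<Sum>\<beta>\<in>mindices d. \<Sum>i=1..n.
         c \<alpha> * c \<beta> * (monomial_val \<alpha> (Y i) * monomial_val \<beta> (Y i)))"
    by (simp add: quad_form_def empirical_moment_matrix_def sum_distrib_left sum_divide_distrib)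
  also have "(\<Sum>\<alpha>\<in>mindices d. \<Sum>\<beta>\<in>mindices d. \<Sum>i=1..n.
         c \<alpha> * c \<beta> * (monomial_val \<alpha> (Y i) * monomial_val \<beta> (Y i))) =
      (\<Sum>\<alpha>\<in>mindices d. \<Sum>i=1..n. \<Sum>\<beta>\<in>mindices d.
         c \<alpha> * c \<beta> * (monomial_val \<alpha> (Y i) * monomial_val \<beta> (Y i)))"
    by (intro sum.cong refl sum.swap)
  also have "\<dots> = (\<Sum>i=1..n. (poly_eval d c (Y i))\<^sup>2)"
    by (subst sum.swap) (simp add: power2_eq_square poly_eval_mult)
  finally show ?thesis .
qed

lemma christoffel_emp_eq_Inf_quad_form:
  "christoffel_emp Y n d \<xi> =
     Inf (quad_form (mindices d) (empirical_moment_matrix Y n) ` {c. poly_eval d c \<xi> = 1})"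
  unfolding christoffel_emp_def Collect_polys_eq_image quad_form_empirical_moment_matrix ..

lemma quad_form_diff_le:
  assumes "finite A" and "\<And>\<alpha> \<beta>. \<alpha> \<in> A \<Longrightarrow> \<beta> \<in> A \<Longrightarrow> \<bar>G' \<alpha> \<beta> - G \<alpha> \<beta>\<bar> \<le> \<delta>"
  shows "\<bar>quad_form A G' c - quad_form A G c\<bar> \<le> \<delta> * (\<Sum>\<alpha>\<in>A. \<bar>c \<alpha>\<bar>)\<^sup>2"
proof -
  have "\<bar>quad_form A G' c - quad_form A G c\<bar> = \<bar>\<Sum>\<alpha>\<in>A. \<Sum>\<beta>\<in>A. c \<alpha> * c \<beta> * (G' \<alpha> \<beta> - G \<alpha> \<beta>)\<bar>"
    by (simp add: quad_form_def sum_subtractf right_diff_distrib)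
  also have "\<dots> \<le> (\<Sum>\<alpha>\<in>A. \<Sum>\<beta>\<in>A. \<bar>c \<alpha> * c \<beta> * (G' \<alpha> \<beta> - G \<alpha> \<beta>)\<bar>)"
    by (rule order_trans[OF sum_abs], intro sum_mono sum_abs)
  also have "\<dots> = (\<Sum>\<alpha>\<in>A. \<Sum>\<beta>\<in>A. \<bar>c \<alpha>\<bar> * \<bar>c \<beta>\<bar> * \<bar>G' \<alpha> \<beta> - G \<alpha> \<beta>\<bar>)"
    by (simp add: abs_mult)
  also have "\<dots> \<le> (\<Sum>\<alpha>\<in>A. \<Sum>\<beta>\<in>A. \<bar>c \<alpha>\<bar> * \<bar>c \<beta>\<bar> * \<delta>)"
    using assms(2) by (intro sum_mono mult_left_mono) auto
  also have "\<dots> = \<delta> * (\<Sum>\<alpha>\<in>A. \<bar>c \<alpha>\<bar>)\<^sup>2"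
    by (simp add: power2_eq_square sum_product sum_distrib_left mult_ac)
  finally show ?thesis .
qed

lemma Inf_relative_perturbation:
  fixes q q' :: "'c \<Rightarrow> real"
  assumes "S \<noteq> {}" and q_nonneg: "\<And>c. c \<in> S \<Longrightarrow> 0 \<le> q c" and q'_nonneg: "\<And>c. c \<in> S \<Longrightarrow> 0 \<le> q' c"
    and close: "\<And>c. c \<in> S \<Longrightarrow> \<bar>q' c - q c\<bar> \<le> \<eta> * q c"
    and Inf_le_1: "Inf (q ` S) \<le> 1" and "0 \<le> \<eta>"
  shows "\<bar>Inf (q' ` S) - Inf (q ` S)\<bar> \<le> \<eta>"
proof -
  define I where "I = Inf (q ` S)"
  define I' where "I' = Inf (q' ` S)"
  have "0 \<le> I"
    unfolding I_def using assms(1) q_nonneg by (intro cInf_greatest) auto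
  have I_le: "I \<le> q c" if "c \<in> S" for c
    unfolding I_def using that q_nonneg by (intro cInf_lower bdd_belowI2) auto
  have I'_le: "I' \<le> q' c" if "c \<in> S" for c
    unfolding I'_def using that q'_nonneg by (intro cInf_lower bdd_belowI2) auto
  have "I' / (1 + \<eta>) \<le> I"
    unfolding I_def
  proof (rule cInf_greatest)
    fix y assume "y \<in> q ` S"
    then obtain c where "c \<in> S" "y = q c" by auto
    then have "I' \<le> (1 + \<eta>) * y"
      using I'_le close by (fastforce simp: algebra_simps abs_le_iff)
    then show "I' / (1 + \<eta>) \<le> y"
      using \<open>0 \<le> \<eta>\<close> by (simp add: divide_le_eq mult.commute)
  qed (use assms(1) in simp)
  then have upper: "I' \<le> (1 + \<eta>) * I"
    using \<open>0 \<le> \<eta>\<close> by (simp add: divide_le_eq mult.commute)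
  have lower: "(1 - \<eta>) * I \<le> I'"
    unfolding I'_def
  proof (rule cInf_greatest)
    fix y assume "y \<in> q' ` S"
    then obtain c where c: "c \<in> S" "y = q' c" by auto
    show "(1 - \<eta>) * I \<le> y"
    proof (cases "\<eta> \<le> 1")
      case True
      then have "(1 - \<eta>) * I \<le> (1 - \<eta>) * q c"
        using I_le[OF c(1)] by (intro mult_left_mono) auto
      also have "\<dots> \<le> q' c"
        using close[OF c(1)] by (simp add: algebra_simps abs_le_iff)
      finally show ?thesis using c by simp
    next
      case False
      then have "(1 - \<eta>) * I \<le> 0"
        using \<open>0 \<le> I\<close> by (simp add: mult_nonpos_nonneg)
      then show ?thesis using q'_nonneg c by fastforce
    qed
  qed (use assms(1) in simp)
  have "\<eta> * I \<le> \<eta>"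
    using Inf_le_1 \<open>0 \<le> \<eta>\<close> unfolding I_def by (simp add: mult_left_le)
  with upper lower show ?thesis
    unfolding I_def[symmetric] I'_def[symmetric] by (simp add: algebra_simps abs_le_iff)
qed

lemma quadratic_nonneg_imp_discriminant_le:
  fixes a b q :: real
  assumes nonneg: "\<And>t. 0 \<le> a * t\<^sup>2 - 2 * b * t + q" and "0 \<le> a"
  shows "b\<^sup>2 \<le> a * q"
proof (cases "a = 0")
  case True
  show ?thesis
  proof (cases "b = 0")
    case False
    have "0 \<le> a * ((q + 1) / (2 * b))\<^sup>2 - 2 * b * ((q + 1) / (2 * b)) + q" by (rule nonneg)
    with True False show ?thesis by (simp add: field_simps)
  qed (simp add: True)
next
  case False
  with \<open>0 \<le> a\<close> have "0 < a" by simp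
  have "0 \<le> a * (b / a)\<^sup>2 - 2 * b * (b / a) + q" by (rule nonneg)
  also have "\<dots> = q - b\<^sup>2 / a"
    using \<open>0 < a\<close> by (simp add: field_simps power2_eq_square)
  finally show ?thesis
    using \<open>0 < a\<close> by (simp add: field_simps mult.commute)
qed

lemma integral_mult_square_le:
  fixes f g :: "'a \<Rightarrow> real"
  assumes "integrable M (\<lambda>x. (f x)\<^sup>2)" "integrable M (\<lambda>x. (g x)\<^sup>2)" "integrable M (\<lambda>x. f x * g x)"
  shows "(\<integral>x. f x * g x \<partial>M)\<^sup>2 \<le> (\<integral>x. (f x)\<^sup>2 \<partial>M) * (\<integral>x. (g x)\<^sup>2 \<partial>M)"
proof (rule quadratic_nonneg_imp_discriminant_le)
  fix t :: real
  have "0 \<le> (\<integral>x. (t * f x - g x)\<^sup>2 \<partial>M)"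
    by (intro integral_nonneg_AE) auto
  also have "\<dots> = (\<integral>x. t\<^sup>2 * (f x)\<^sup>2 + (- 2 * t) * (f x * g x) + (g x)\<^sup>2 \<partial>M)"
    by (intro Bochner_Integration.integral_cong) (simp_all add: power2_eq_square algebra_simps)
  also have "\<dots> = t\<^sup>2 * (\<integral>x. (f x)\<^sup>2 \<partial>M) + (- 2 * t) * (\<integral>x. f x * g x \<partial>M) + (\<integral>x. (g x)\<^sup>2 \<partial>M)"
    using assms by (simp add: Bochner_Integration.integral_add)
  finally show "0 \<le> (\<integral>x. (f x)\<^sup>2 \<partial>M) * t\<^sup>2 - 2 * (\<integral>x. f x * g x \<partial>M) * t + (\<integral>x. (g x)\<^sup>2 \<partial>M)"
    by (simp add: algebra_simps)
qed (intro integral_nonneg_AE; simp)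

lemma sum_left_inverse_mult:
  fixes G N :: "'i \<Rightarrow> 'i \<Rightarrow> real"
  assumes "finite A" "\<gamma> \<in> A"
    and left_inverse: "\<And>a b. a \<in> A \<Longrightarrow> b \<in> A \<Longrightarrow> (\<Sum>c\<in>A. N a c * G c b) = (if a = b then 1 else 0)"
  shows "(\<Sum>\<alpha>\<in>A. N \<gamma> \<alpha> * (\<Sum>\<beta>\<in>A. G \<alpha> \<beta> * c \<beta>)) = c \<gamma>"
proof -
  have "(\<Sum>\<alpha>\<in>A. N \<gamma> \<alpha> * (\<Sum>\<beta>\<in>A. G \<alpha> \<beta> * c \<beta>)) = (\<Sum>\<alpha>\<in>A. \<Sum>\<beta>\<in>A. N \<gamma> \<alpha> * G \<alpha> \<beta> * c \<beta>)"
    by (simp add: sum_distrib_left mult.assoc)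
  also have "\<dots> = (\<Sum>\<beta>\<in>A. (\<Sum>\<alpha>\<in>A. N \<gamma> \<alpha> * G \<alpha> \<beta>) * c \<beta>)"
    unfolding sum_distrib_right by (rule sum.swap)
  also have "\<dots> = (\<Sum>\<beta>\<in>A. if \<gamma> = \<beta> then c \<beta> else 0)"
    using assms(2) by (intro sum.cong) (simp_all add: left_inverse)
  finally show ?thesis
    using assms(1,2) by simp
qed

lemma
  fixes f :: "'a \<Rightarrow> real"
  assumes "\<And>x. \<bar>f x\<bar> \<le> b"
  shows SUP_abs_nonneg: "0 \<le> (SUP x. \<bar>f x\<bar>)" and SUP_abs_le: "(SUP x. \<bar>f x\<bar>) \<le> b"
proof -
  have "bdd_above (range (\<lambda>x. \<bar>f x\<bar>))"
    using assms by (intro bdd_aboveI2)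
  then have "\<bar>f undefined\<bar> \<le> (SUP x. \<bar>f x\<bar>)"
    by (rule cSUP_upper[OF UNIV_I])
  then show "0 \<le> (SUP x. \<bar>f x\<bar>)"
    by (rule order_trans[OF abs_ge_zero])
  show "(SUP x. \<bar>f x\<bar>) \<le> b"
    using assms by (simp add: cSUP_least)
qed

section \<open>Perturbation of the moments\<close>

context
  fixes \<mu> :: "(real^'p::finite) measure"
  assumes prob: "prob_space \<mu>"
    and integrable_moments: "\<And>\<alpha> \<beta>. integrable \<mu> (\<lambda>x. monomial_val \<alpha> x * monomial_val \<beta> x)"
begin

lemma integrable_poly_eval_mult: "integrable \<mu> (\<lambda>x. poly_eval d c x * poly_eval d c' x)"
  unfolding poly_eval_mult by (simp add: integrable_moments)

lemma integral_poly_eval_mult: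
  "(\<integral>x. poly_eval d c x * poly_eval d c' x \<partial>\<mu>) =
     (\<Sum>\<alpha>\<in>mindices d. \<Sum>\<beta>\<in>mindices d. c \<alpha> * c' \<beta> * moment_matrix \<mu> d \<alpha> \<beta>)"
  unfolding poly_eval_mult moment_matrix_def by (simp add: integrable_moments)

lemma quad_form_moment_matrix:
  "quad_form (mindices d) (moment_matrix \<mu> d) c = (\<integral>x. (poly_eval d c x)\<^sup>2 \<partial>\<mu>)"
  by (simp add: quad_form_def power2_eq_square integral_poly_eval_mult)

lemma quad_form_moment_matrix_nonneg: "0 \<le> quad_form (mindices d) (moment_matrix \<mu> d) c"
  unfolding quad_form_moment_matrix by (intro integral_nonneg_AE) simp

lemma moment_matrix_mult_eq_integral:
  assumes "\<alpha> \<in> mindices d"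
  shows "(\<Sum>\<beta>\<in>mindices d. moment_matrix \<mu> d \<alpha> \<beta> * c \<beta>) = (\<integral>x. monomial_val \<alpha> x * poly_eval d c x \<partial>\<mu>)"
proof -
  have "(\<integral>x. monomial_val \<alpha> x * poly_eval d c x \<partial>\<mu>) =
      (\<Sum>\<alpha>'\<in>mindices d. if \<alpha>' = \<alpha> then \<Sum>\<beta>\<in>mindices d. c \<beta> * moment_matrix \<mu> d \<alpha>' \<beta> else 0)"
    unfolding poly_eval_unit_coeff[OF assms, symmetric] integral_poly_eval_mult
    by (intro sum.cong) auto
  then show ?thesis
    using assms by (simp add: finite_mindices mult.commute)
qed

lemma christoffel_eq_Inf_quad_form:
  "christoffel \<mu> d \<xi> = Inf (quad_form (mindices d) (moment_matrix \<mu> d) ` {c. poly_eval d c \<xi> = 1})"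
  unfolding christoffel_def Collect_polys_eq_image quad_form_moment_matrix ..

lemma christoffel_le_1: "christoffel \<mu> d \<xi> \<le> 1"
proof -
  let ?one = "\<lambda>\<beta>. if \<beta> = (\<lambda>_. 0) then 1 else 0"
  have "christoffel \<mu> d \<xi> \<le> quad_form (mindices d) (moment_matrix \<mu> d) ?one"
    unfolding christoffel_eq_Inf_quad_form using poly_eval_const_one
    by (intro cInf_lower bdd_belowI2[where m = 0] imageI quad_form_moment_matrix_nonneg) auto
  also have "\<dots> = 1"
    by (simp add: quad_form_moment_matrix poly_eval_const_one prob_space.prob_space[OF prob])
  finally show ?thesis .
qed

lemma moment_matrix_mult_bound:
  assumes "\<alpha> \<in> mindices d"
  shows "\<bar>\<Sum>\<beta>\<in>mindices d. moment_matrix \<mu> d \<alpha> \<beta> * c \<beta>\<bar>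
    \<le> sqrt (moment_matrix \<mu> d \<alpha> \<alpha>) * sqrt (quad_form (mindices d) (moment_matrix \<mu> d) c)"
proof -
  have "(\<integral>x. monomial_val \<alpha> x * poly_eval d c x \<partial>\<mu>)\<^sup>2
      \<le> (\<integral>x. (monomial_val \<alpha> x)\<^sup>2 \<partial>\<mu>) * (\<integral>x. (poly_eval d c x)\<^sup>2 \<partial>\<mu>)"
    using integrable_moments[of \<alpha> \<alpha>] integrable_poly_eval_mult[of d c c]
      integrable_poly_eval_mult[of d "\<lambda>\<beta>. if \<beta> = \<alpha> then 1 else 0" c]
    by (intro integral_mult_square_le) (simp_all add: power2_eq_square poly_eval_unit_coeff[OF assms])
  moreover have "(\<integral>x. (monomial_val \<alpha> x)\<^sup>2 \<partial>\<mu>) = moment_matrix \<mu> d \<alpha> \<alpha>"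
    by (simp add: moment_matrix_def power2_eq_square)
  ultimately have "(\<Sum>\<beta>\<in>mindices d. moment_matrix \<mu> d \<alpha> \<beta> * c \<beta>)\<^sup>2
      \<le> moment_matrix \<mu> d \<alpha> \<alpha> * quad_form (mindices d) (moment_matrix \<mu> d) c"
    unfolding moment_matrix_mult_eq_integral[OF assms] quad_form_moment_matrix by simp
  then have "sqrt ((\<Sum>\<beta>\<in>mindices d. moment_matrix \<mu> d \<alpha> \<beta> * c \<beta>)\<^sup>2)
      \<le> sqrt (moment_matrix \<mu> d \<alpha> \<alpha> * quad_form (mindices d) (moment_matrix \<mu> d) c)"
    by (rule real_sqrt_le_mono)
  then show ?thesis
    by (simp add: real_sqrt_mult)
qed

lemma coefficients_bound:
  assumes "invertible_on (mindices d) (moment_matrix \<mu> d)"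
  obtains C where "0 < C"
    and "\<And>c. (\<Sum>\<gamma>\<in>mindices d. \<bar>c \<gamma>\<bar>)\<^sup>2 \<le> C * quad_form (mindices d) (moment_matrix \<mu> d) c"
proof -
  let ?A = "mindices d" and ?G = "moment_matrix \<mu> d"
  obtain N where left_inverse: "\<And>a b. a \<in> ?A \<Longrightarrow> b \<in> ?A \<Longrightarrow>
      (\<Sum>c\<in>?A. N a c * ?G c b) = (if a = b then 1 else 0)"
    using assms unfolding invertible_on_def by blast
  define K where "K = (\<Sum>\<gamma>\<in>?A. \<Sum>\<alpha>\<in>?A. \<bar>N \<gamma> \<alpha>\<bar> * sqrt (?G \<alpha> \<alpha>))"
  have "0 < K\<^sup>2 + 1"
    by (simp add: add_nonneg_pos)
  moreover have "(\<Sum>\<gamma>\<in>?A. \<bar>c \<gamma>\<bar>)\<^sup>2 \<le> (K\<^sup>2 + 1) * quad_form ?A ?G c" for c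
  proof -
    let ?Q = "quad_form ?A ?G c"
    have coeff_le: "\<bar>c \<gamma>\<bar> \<le> (\<Sum>\<alpha>\<in>?A. \<bar>N \<gamma> \<alpha>\<bar> * sqrt (?G \<alpha> \<alpha>)) * sqrt ?Q" if "\<gamma> \<in> ?A" for \<gamma>
    proof -
      have "\<bar>c \<gamma>\<bar> = \<bar>\<Sum>\<alpha>\<in>?A. N \<gamma> \<alpha> * (\<Sum>\<beta>\<in>?A. ?G \<alpha> \<beta> * c \<beta>)\<bar>"
        using sum_left_inverse_mult[OF finite_mindices that left_inverse] by simp
      also have "\<dots> \<le> (\<Sum>\<alpha>\<in>?A. \<bar>N \<gamma> \<alpha>\<bar> * \<bar>\<Sum>\<beta>\<in>?A. ?G \<alpha> \<beta> * c \<beta>\<bar>)"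
        unfolding abs_mult[symmetric] by (rule sum_abs)
      also have "\<dots> \<le> (\<Sum>\<alpha>\<in>?A. \<bar>N \<gamma> \<alpha>\<bar> * (sqrt (?G \<alpha> \<alpha>) * sqrt ?Q))"
        by (intro sum_mono mult_left_mono moment_matrix_mult_bound) auto
      also have "\<dots> = (\<Sum>\<alpha>\<in>?A. \<bar>N \<gamma> \<alpha>\<bar> * sqrt (?G \<alpha> \<alpha>)) * sqrt ?Q"
        by (simp add: sum_distrib_right mult.assoc)
      finally show ?thesis .
    qed
    have "(\<Sum>\<gamma>\<in>?A. \<bar>c \<gamma>\<bar>) \<le> (\<Sum>\<gamma>\<in>?A. (\<Sum>\<alpha>\<in>?A. \<bar>N \<gamma> \<alpha>\<bar> * sqrt (?G \<alpha> \<alpha>)) * sqrt ?Q)"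
      by (intro sum_mono coeff_le)
    also have "\<dots> = K * sqrt ?Q"
      unfolding K_def by (simp add: sum_distrib_right)
    finally have "(\<Sum>\<gamma>\<in>?A. \<bar>c \<gamma>\<bar>) \<le> K * sqrt ?Q" .
    then have "(\<Sum>\<gamma>\<in>?A. \<bar>c \<gamma>\<bar>)\<^sup>2 \<le> (K * sqrt ?Q)\<^sup>2"
      by (rule power_mono) (simp add: sum_nonneg)
    also have "\<dots> = K\<^sup>2 * ?Q"
      using quad_form_moment_matrix_nonneg[of d c] by (simp add: power_mult_distrib)
    also have "\<dots> \<le> (K\<^sup>2 + 1) * ?Q"
      using quad_form_moment_matrix_nonneg[of d c] by (simp add: mult_right_mono)
    finally show ?thesis .
  qed
  ultimately show ?thesis
    by (rule that)
qed

lemma christoffel_emp_diff_le: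
  assumes C: "\<And>c. (\<Sum>\<gamma>\<in>mindices d. \<bar>c \<gamma>\<bar>)\<^sup>2 \<le> C * quad_form (mindices d) (moment_matrix \<mu> d) c"
    and "0 \<le> C"
    and close: "\<And>\<alpha> \<beta>. \<alpha> \<in> mindices d \<Longrightarrow> \<beta> \<in> mindices d \<Longrightarrow>
      \<bar>empirical_moment_matrix Y n \<alpha> \<beta> - moment_matrix \<mu> d \<alpha> \<beta>\<bar> \<le> \<delta>"
    and "0 \<le> \<delta>"
  shows "\<bar>christoffel_emp Y n d \<xi> - christoffel \<mu> d \<xi>\<bar> \<le> \<delta> * C"
  unfolding christoffel_emp_eq_Inf_quad_form christoffel_eq_Inf_quad_form
proof (rule Inf_relative_perturbation)
  show "{c. poly_eval d c \<xi> = 1} \<noteq> {}"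
    using poly_eval_const_one by blast
  show "0 \<le> quad_form (mindices d) (empirical_moment_matrix Y n) c" for c
    unfolding quad_form_empirical_moment_matrix by (simp add: sum_nonneg)
  show "\<bar>quad_form (mindices d) (empirical_moment_matrix Y n) c - quad_form (mindices d) (moment_matrix \<mu> d) c\<bar>
      \<le> \<delta> * C * quad_form (mindices d) (moment_matrix \<mu> d) c" for c
    using quad_form_diff_le[of "mindices d" "empirical_moment_matrix Y n" "moment_matrix \<mu> d" \<delta> c,
        OF finite_mindices close] mult_left_mono[OF C[of c] \<open>0 \<le> \<delta>\<close>]
    by (simp add: mult.assoc)
  show "0 \<le> quad_form (mindices d) (moment_matrix \<mu> d) c" for c
    by (rule quad_form_moment_matrix_nonneg)
  show "Inf (quad_form (mindices d) (moment_matrix \<mu> d) ` {c. poly_eval d c \<xi> = 1}) \<le> 1"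
    using christoffel_le_1 unfolding christoffel_eq_Inf_quad_form .
  show "0 \<le> \<delta> * C"
    using \<open>0 \<le> C\<close> \<open>0 \<le> \<delta>\<close> by simp
qed

lemma sup_christoffel_diff_tendsto_0:
  assumes "invertible_on (mindices d) (moment_matrix \<mu> d)"
    and moments_tendsto: "\<And>\<alpha> \<beta>. \<alpha> \<in> mindices d \<Longrightarrow> \<beta> \<in> mindices d \<Longrightarrow>
      (\<lambda>n. empirical_moment_matrix Y n \<alpha> \<beta>) \<longlonglongrightarrow> moment_matrix \<mu> d \<alpha> \<beta>"
  shows "(\<lambda>n. SUP x. \<bar>christoffel_emp Y n d x - christoffel \<mu> d x\<bar>) \<longlonglongrightarrow> 0"
proof -
  obtain C where "0 < C"
    and C: "\<And>c. (\<Sum>\<gamma>\<in>mindices d. \<bar>c \<gamma>\<bar>)\<^sup>2 \<le> C * quad_form (mindices d) (moment_matrix \<mu> d) c"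
    using coefficients_bound[OF assms(1)] by blast
  define \<delta> where "\<delta> n = (\<Sum>\<alpha>\<in>mindices d. \<Sum>\<beta>\<in>mindices d.
      \<bar>empirical_moment_matrix Y n \<alpha> \<beta> - moment_matrix \<mu> d \<alpha> \<beta>\<bar>)" for n
  have "\<delta> \<longlonglongrightarrow> 0"
    unfolding \<delta>_def using moments_tendsto
    by (intro tendsto_null_sum tendsto_rabs_zero LIM_zero) auto
  then have \<delta>C: "(\<lambda>n. \<delta> n * C) \<longlonglongrightarrow> 0"
    by (rule tendsto_mult_left_zero)
  have bounds: "0 \<le> (SUP x. \<bar>christoffel_emp Y n d x - christoffel \<mu> d x\<bar>) \<and>
      (SUP x. \<bar>christoffel_emp Y n d x - christoffel \<mu> d x\<bar>) \<le> \<delta> n * C" for n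
  proof -
    have entry_le: "\<bar>empirical_moment_matrix Y n \<alpha> \<beta> - moment_matrix \<mu> d \<alpha> \<beta>\<bar> \<le> \<delta> n"
      if "\<alpha> \<in> mindices d" "\<beta> \<in> mindices d" for \<alpha> \<beta>
    proof -
      have "\<bar>empirical_moment_matrix Y n \<alpha> \<beta> - moment_matrix \<mu> d \<alpha> \<beta>\<bar>
          \<le> (\<Sum>\<beta>'\<in>mindices d. \<bar>empirical_moment_matrix Y n \<alpha> \<beta>' - moment_matrix \<mu> d \<alpha> \<beta>'\<bar>)"
        using that by (intro member_le_sum) (auto simp: finite_mindices)
      also have "\<dots> \<le> \<delta> n"
        unfolding \<delta>_def using that by (intro member_le_sum sum_nonneg) (auto simp: finite_mindices)
      finally show ?thesis .
    qed
    have "0 \<le> \<delta> n"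
      unfolding \<delta>_def by (intro sum_nonneg) simp
    have "\<bar>christoffel_emp Y n d x - christoffel \<mu> d x\<bar> \<le> \<delta> n * C" for x
      using \<open>0 < C\<close> \<open>0 \<le> \<delta> n\<close> by (intro christoffel_emp_diff_le[OF C _ entry_le]) simp_all
    then show ?thesis
      by (intro conjI SUP_abs_nonneg SUP_abs_le)
  qed
  show ?thesis
    using bounds by (intro tendsto_sandwich[OF _ _ tendsto_const \<delta>C] always_eventually allI) simp_all
qed

end

section \<open>Almost sure convergence of the empirical moments\<close>

lemma integrable_continuous_AE_compact:
  fixes f :: "'a::topological_space \<Rightarrow> real"
  assumes "finite_measure \<mu>" "sets \<mu> = sets borel" "compact K" "AE x in \<mu>. x \<in> K"
    and "continuous_on UNIV f"
  shows "integrable \<mu> f"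
proof -
  have "compact (f ` K)"
    by (rule compact_continuous_image[OF continuous_on_subset[OF assms(5)] assms(3)]) simp
  then obtain B where B: "\<forall>y\<in>f ` K. norm y \<le> B"
    using compact_imp_bounded bounded_iff by metis
  have "AE x in \<mu>. norm (f x) \<le> B"
    using assms(4) by eventually_elim (use B in auto)
  moreover have "f \<in> borel_measurable \<mu>"
    unfolding measurable_cong_sets[OF assms(2) refl] using assms(5)
    by (rule borel_measurable_continuous_onI)
  ultimately show ?thesis
    using assms(1) finite_measure.integrable_const_bound by blast
qed

lemma (in prob_space) average_eventually_close:
  fixes Z :: "nat \<Rightarrow> 'a \<Rightarrow> real"
  assumes indep: "indep_vars (\<lambda>_. borel) Z UNIV"
    and identical: "\<And>i. distr M borel (Z i) = distr M borel (Z 0)"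
    and bounded: "\<And>i x. Z i x \<in> {a..b}" and "a < b" and "0 < e"
  shows "AE x in M. eventually (\<lambda>n. \<bar>(\<Sum>i=1..n. Z i x) / real n - expectation (Z 0)\<bar> < e) sequentially"
proof -
  have [measurable]: "Z i \<in> borel_measurable M" for i
    using indep unfolding indep_vars_def by blast
  define r where "r = 2 * e\<^sup>2 / (b - a)\<^sup>2"
  define A where "A n = {x \<in> space M. e \<le> \<bar>(\<Sum>i=1..n. Z i x) / real n - expectation (Z 0)\<bar>}" for n
  have [measurable]: "A n \<in> events" for n
    unfolding A_def by measurable
  have prob_A: "prob (A n) \<le> 2 * exp (- r) ^ n" for n
  proof (cases "n = 0")
    case True
    then show ?thesis
      by (simp add: order_trans[OF prob_le_1])
  next
    case False
    interpret Hoeffding_ineq_iid M "{1..n}" Z "Z 0" a b "expectation (Z 0)"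
    proof unfold_locales
      show "indep_vars (\<lambda>_. borel) Z {1..n}"
        by (rule indep_vars_subset[OF indep]) simp
      show "distr M borel (Z i) = distr M borel (Z 0)" for i
        by (rule identical)
      show "AE x in M. Z 0 x \<in> {a..b}"
        using bounded by simp
    qed simp_all
    have "prob (A n) \<le> 2 * exp (- 2 * real n * e\<^sup>2 / (b - a)\<^sup>2)"
      unfolding A_def using Hoeffding_ineq_abs_ge'[of e] \<open>0 < e\<close> \<open>a < b\<close> False by simp
    also have "\<dots> = 2 * exp (- r) ^ n"
      by (simp add: r_def exp_of_nat_mult[symmetric])
    finally show ?thesis .
  qed
  have "summable (\<lambda>n. 2 * exp (- r) ^ n)"
    using \<open>0 < e\<close> \<open>a < b\<close> by (intro summable_mult summable_geometric) (simp add: r_def)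
  then have "summable (\<lambda>n. prob (A n))"
    by (rule summable_comparison_test[rotated]) (use prob_A in auto)
  then have "AE x in M. eventually (\<lambda>n. x \<in> space M - A n) sequentially"
    by (intro borel_cantelli_AE1) (auto simp: emeasure_eq_measure)
  then show ?thesis
    by (rule eventually_mono) (auto elim!: eventually_mono simp: A_def)
qed

lemma (in prob_space) strong_law_bounded_iid:
  fixes Z :: "nat \<Rightarrow> 'a \<Rightarrow> real"
  assumes "indep_vars (\<lambda>_. borel) Z UNIV"
    and "\<And>i. distr M borel (Z i) = distr M borel (Z 0)"
    and "\<And>i x. Z i x \<in> {a..b}" and "a < b"
  shows "AE x in M. (\<lambda>n. (\<Sum>i=1..n. Z i x) / real n) \<longlonglongrightarrow> expectation (Z 0)"
proof -
  have "AE x in M. \<forall>k. eventually (\<lambda>n.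
      \<bar>(\<Sum>i=1..n. Z i x) / real n - expectation (Z 0)\<bar> < inverse (real (Suc k))) sequentially"
    unfolding AE_all_countable by (intro allI average_eventually_close[OF assms]) simp
  then show ?thesis
  proof (rule eventually_mono)
    fix x
    assume close: "\<forall>k. eventually (\<lambda>n.
      \<bar>(\<Sum>i=1..n. Z i x) / real n - expectation (Z 0)\<bar> < inverse (real (Suc k))) sequentially"
    show "(\<lambda>n. (\<Sum>i=1..n. Z i x) / real n) \<longlonglongrightarrow> expectation (Z 0)"
    proof (rule tendstoI)
      fix e :: real
      assume "0 < e"
      then obtain k where "k > 0" "inverse (real k) < e"
        using ex_inverse_of_nat_less by auto
      then have "inverse (real (Suc (k - 1))) < e"
        by simp
      then show "eventually (\<lambda>n. dist ((\<Sum>i=1..n. Z i x) / real n) (expectation (Z 0)) < e) sequentially"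
        using close[rule_format, of "k - 1"] by (auto elim!: eventually_mono simp: dist_real_def)
    qed
  qed
qed

lemma (in prob_space) average_tendsto_integral_compact_support:
  fixes X :: "nat \<Rightarrow> 'a \<Rightarrow> 'b::t2_space" and \<mu> :: "'b measure" and f :: "'b \<Rightarrow> real"
  assumes sets_\<mu>: "sets \<mu> = sets borel" and "compact K" and AE_K: "AE x in \<mu>. x \<in> K"
    and indep: "indep_vars (\<lambda>_. borel) X UNIV" and distr_X: "\<And>i. distr M borel (X i) = \<mu>"
    and cont: "continuous_on UNIV f"
  shows "AE \<omega> in M. (\<lambda>n. (\<Sum>i=1..n. f (X i \<omega>)) / real n) \<longlonglongrightarrow> (\<integral>x. f x \<partial>\<mu>)"
proof -
  have [measurable]: "X i \<in> borel_measurable M" for i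
    using indep unfolding indep_vars_def by blast
  have [measurable]: "K \<in> sets borel"
    using \<open>compact K\<close> by (simp add: compact_imp_closed borel_closed)
  obtain B where B: "\<And>x. x \<in> K \<Longrightarrow> \<bar>f x\<bar> \<le> B"
    using compact_imp_bounded[OF compact_continuous_image[OF continuous_on_subset[OF cont] \<open>compact K\<close>]]
    by (auto simp: bounded_iff)
  define g where "g x = (if x \<in> K then f x else 0)" for x
  have [measurable]: "g \<in> borel_measurable borel"
    unfolding g_def using cont
    by (intro borel_measurable_continuous_on_if) (auto intro: continuous_on_subset)
  \<comment> \<open>Truncating \<open>f\<close> outside the support makes the summands bounded, so Hoeffding's inequality applies.\<close>
  have lim: "AE \<omega> in M. (\<lambda>n. (\<Sum>i=1..n. g (X i \<omega>)) / real n) \<longlonglongrightarrow> expectation (\<lambda>\<omega>. g (X 0 \<omega>))"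
  proof (rule strong_law_bounded_iid[where a = "- \<bar>B\<bar> - 1" and b = "\<bar>B\<bar> + 1"])
    show "indep_vars (\<lambda>_. borel) (\<lambda>i \<omega>. g (X i \<omega>)) UNIV"
      by (rule indep_vars_compose2[OF indep]) simp
    have "distr M borel (\<lambda>\<omega>. g (X i \<omega>)) = distr \<mu> borel g" for i
      using distr_distr[of g borel borel "X i" M, symmetric] by (simp add: distr_X comp_def)
    then show "distr M borel (\<lambda>\<omega>. g (X i \<omega>)) = distr M borel (\<lambda>\<omega>. g (X 0 \<omega>))" for i
      by simp
    show "g (X i \<omega>) \<in> {- \<bar>B\<bar> - 1..\<bar>B\<bar> + 1}" for i \<omega>
      using B[of "X i \<omega>"] by (auto simp: g_def abs_le_iff)
  qed simp
  have expectation_g: "expectation (\<lambda>\<omega>. g (X 0 \<omega>)) = (\<integral>x. f x \<partial>\<mu>)"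
  proof -
    have "expectation (\<lambda>\<omega>. g (X 0 \<omega>)) = (\<integral>x. g x \<partial>\<mu>)"
      using integral_distr[of "X 0" M borel g] by (simp add: distr_X)
    also have "\<dots> = (\<integral>x. f x \<partial>\<mu>)"
    proof (rule integral_cong_AE)
      show "g \<in> borel_measurable \<mu>"
        unfolding measurable_cong_sets[OF sets_\<mu> refl] by measurable
      show "f \<in> borel_measurable \<mu>"
        unfolding measurable_cong_sets[OF sets_\<mu> refl] using cont by (rule borel_measurable_continuous_onI)
      show "AE x in \<mu>. g x = f x"
        using AE_K by eventually_elim (simp add: g_def)
    qed
    finally show ?thesis .
  qed
  have "AE \<omega> in M. \<forall>i. X i \<omega> \<in> K"
    unfolding AE_all_countable
  proof
    fix i
    have "AE x in distr M borel (X i). x \<in> K"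
      unfolding distr_X by (rule AE_K)
    then show "AE \<omega> in M. X i \<omega> \<in> K"
      by (subst (asm) AE_distr_iff) auto
  qed
  with lim show ?thesis
    unfolding expectation_g by eventually_elim (simp add: g_def)
qed

theorem theorem3p12:
  fixes M :: "'\<omega> measure" and \<mu> :: "(real^'p::finite) measure"
    and X :: "nat \<Rightarrow> '\<omega> \<Rightarrow> real^'p" and d :: nat
  assumes "prob_space M"
    and "prob_space \<mu>" and "sets \<mu> = sets borel"
    and "\<exists>K. compact K \<and> measure \<mu> K = 1"
    and "\<And>i. X i \<in> borel_measurable M"
    and "prob_space.indep_vars M (\<lambda>_. borel) X UNIV"
    and "\<And>i. distr M borel (X i) = \<mu>"
    and "d \<ge> 1"
    and "invertible_on (mindices d) (moment_matrix \<mu> d)"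
  shows "AE \<omega> in M. (\<lambda>n. SUP x. \<bar>christoffel_emp (\<lambda>i. X i \<omega>) n d x - christoffel \<mu> d x\<bar>)
           \<longlonglongrightarrow> 0"
proof -
  interpret M: prob_space M by fact
  obtain K where "compact K" "measure \<mu> K = 1"
    using assms(4) by blast
  then have AE_K: "AE x in \<mu>. x \<in> K"
    by (intro prob_space.AE_prob_1[OF assms(2)])
  have moments: "integrable \<mu> (\<lambda>x. monomial_val \<alpha> x * monomial_val \<beta> x)" for \<alpha> \<beta>
    using prob_space.finite_measure[OF assms(2)] assms(3) \<open>compact K\<close> AE_K
    by (rule integrable_continuous_AE_compact) (intro continuous_intros)
  have "AE \<omega> in M. (\<lambda>n. empirical_moment_matrix (\<lambda>i. X i \<omega>) n \<alpha> \<beta>) \<longlonglongrightarrow> moment_matrix \<mu> d \<alpha> \<beta>"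
    for \<alpha> \<beta>
    unfolding empirical_moment_matrix_def moment_matrix_def
    using assms(3) \<open>compact K\<close> AE_K assms(6,7)
    by (rule M.average_tendsto_integral_compact_support) (intro continuous_intros)
  then have "AE \<omega> in M. \<forall>\<alpha>\<in>mindices d. \<forall>\<beta>\<in>mindices d.
      (\<lambda>n. empirical_moment_matrix (\<lambda>i. X i \<omega>) n \<alpha> \<beta>) \<longlonglongrightarrow> moment_matrix \<mu> d \<alpha> \<beta>"
    by (simp add: AE_finite_all finite_mindices)
  then show ?thesis
    by (rule eventually_mono)
      (auto intro: sup_christoffel_diff_tendsto_0[OF assms(2) moments assms(9)])
qed

end
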